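(* Let $A(z)=\sum_{k=0}^{\infty}a_kz^k$ with $a_0\neq 0$ and $H(z)=\sum_{k=1}^{\infty}h_kz^k$ with $h_1\neq 0$ be analytic in a disk $|z|<R$ with $R>1$, with real coefficients. Let the Sheffer polynomials $p_k$ be defined by $A(t)e^{xH(t)}=\sum_{k=0}^{\infty}p_k(x)t^k$ for $|t|<R$, and assume $p_k(x)\ge 0$ for all $x\ge 0$ and all $k$, $A(1)\neq 0$ and $H'(1)=1$. Let $(b_n)$ be a positive increasing sequence with $b_n\to\infty$ and $b_n/n\to 0$, and define $$T_n^*(f;x)=\frac{e^{-\frac{n}{b_n}xH(1)}}{A(1)}\sum_{k=0}^{\infty}p_k\Big(\frac{n}{b_n}x\Big)f\Big(\frac{k}{n}b_n\Big).$$ Let $a>0$. If $f\in C_E[0,\infty)$, then for every $x\in[0,a]$, $$|T_n^*(f;x)-f(x)|\le\Bigg\{1+\sqrt{\big(1+H''(1)\big)a+\frac{b_n}{n}\frac{A'(1)+A''(1)}{A(1)}}\Bigg\}\,\omega\Big(f,\sqrt{\tfrac{b_n}{n}}\Big).$$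
   Context: $C_E[0,\infty)$ denotes the set of continuous functions $f$ on $[0,\infty)$ such that $|f(x)|\le \beta e^{\alpha x}$ for all $x\ge 0$, for some finite positive constants $\alpha,\beta$. For $\delta>0$, $\omega(f,\delta)=\sup\{|f(x)-f(y)|: x,y\in[0,\infty),\ |x-y|\le\delta\}$ is the modulus of continuity of $f$. *)

theory Defs
  imports "HOL-Analysis.Analysis"
begin

definition C_E :: "(real \<Rightarrow> real) \<Rightarrow> bool" where
  "C_E f \<longleftrightarrow> continuous_on {0..} f \<and>
     (\<exists>\<alpha> \<beta>. \<alpha> > 0 \<and> \<beta> > 0 \<and> (\<forall>x\<ge>0. \<bar>f x\<bar> \<le> \<beta> * exp (\<alpha> * x)))"

definition modulus :: "(real \<Rightarrow> real) \<Rightarrow> real \<Rightarrow> ereal" where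
  "modulus f \<delta> = (SUP xy \<in> {(x, y). x \<ge> 0 \<and> y \<ge> 0 \<and> \<bar>x - y\<bar> \<le> \<delta>}.
                     ereal \<bar>f (fst xy) - f (snd xy)\<bar>)"

definition T_star ::
  "(real \<Rightarrow> real) \<Rightarrow> (real \<Rightarrow> real) \<Rightarrow> (nat \<Rightarrow> real \<Rightarrow> real) \<Rightarrow> (nat \<Rightarrow> real)
   \<Rightarrow> nat \<Rightarrow> (real \<Rightarrow> real) \<Rightarrow> real \<Rightarrow> real" where
  "T_star A H p b n f x =
     exp (- (real n / b n) * x * H 1) / A 1 *
     (\<Sum>k. p k (real n / b n * x) * f (real k / real n * b n))"

end

theory Submission
  imports Defs
begin

text \<open>
  With \<open>\<beta> = b n / n\<close> and \<open>u = x / \<beta>\<close>, \<open>T_star\<close> is a weighted mean of the values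
  \<open>f (k \<beta>)\<close> with nonnegative weights \<open>p k u\<close> of total mass \<open>A 1 * exp (u * H 1)\<close>.
  The bound \<open>|f (k \<beta>) - f x| \<le> (1 + |k \<beta> - x| / \<delta>) \<omega>(f, \<delta>)\<close> and Cauchy-Schwarz reduce
  the error to the weighted second moment of \<open>k \<beta> - x\<close>. Differentiating the generating
  function \<open>A t * exp (u * H t)\<close> twice at \<open>t = 1\<close>, where \<open>H' 1 = 1\<close>, this moment is
  \<open>\<beta> (x (1 + H'' 1) + \<beta> (A' 1 + A'' 1) / A 1)\<close> times the total mass. Positivity of the
  weights forces \<open>A 1 > 0\<close> and \<open>1 + H'' 1 \<ge> 0\<close>, so \<open>x\<close> may be replaced by \<open>aa\<close>;
  finally take \<open>\<delta> = \<surd>\<beta>\<close>.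
\<close>

lemma power_series_has_deriv_sums:
  fixes c :: "nat \<Rightarrow> real"
  assumes F: "\<And>t. \<bar>t\<bar> < R \<Longrightarrow> (\<lambda>k. c k * t ^ k) sums F t" and t: "\<bar>t\<bar> < R"
  shows "(F has_real_derivative deriv F t) (at t)"
    and "(\<lambda>k. diffs c k * t ^ k) sums deriv F t"
proof -
  have summ: "summable (\<lambda>k. c k * z ^ k)" if "norm z < R" for z
    using F that sums_summable by fastforce
  have "((\<lambda>z. \<Sum>k. c k * z ^ k) has_real_derivative (\<Sum>k. diffs c k * t ^ k)) (at t)"
    using termdiffs_strong'[OF summ] t by auto
  then have D: "(F has_real_derivative (\<Sum>k. diffs c k * t ^ k)) (at t)"
    by (rule has_field_derivative_transform_within_open[where S = "{-R<..<R}"])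
       (use t in \<open>auto simp: abs_less_iff sums_unique[OF F]\<close>)
  then show "(F has_real_derivative deriv F t) (at t)"
    using DERIV_imp_deriv by metis
  show "(\<lambda>k. diffs c k * t ^ k) sums deriv F t"
    using termdiff_converges[OF _ summ, of t] t D DERIV_imp_deriv by (metis real_norm_def summable_sums)
qed

lemma power_series_deriv2_at:
  fixes c :: "nat \<Rightarrow> real"
  assumes F: "\<And>t. \<bar>t\<bar> < R \<Longrightarrow> (\<lambda>k. c k * t ^ k) sums F t" and t: "\<bar>t\<bar> < R"
  shows "(deriv F has_real_derivative deriv (deriv F) t) (at t)"
  using power_series_has_deriv_sums(1)[OF power_series_has_deriv_sums(2)[OF F] t] .

lemma power_series_factorial_moments:
  fixes c :: "nat \<Rightarrow> real"
  assumes R: "R > 1" and F: "\<And>t. \<bar>t\<bar> < R \<Longrightarrow> (\<lambda>k. c k * t ^ k) sums F t"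
  shows "c sums F 1"
    and "(\<lambda>k. real k * c k) sums deriv F 1"
    and "(\<lambda>k. real k * (real k - 1) * c k) sums deriv (deriv F) 1"
proof -
  have F': "(\<lambda>k. diffs c k * t ^ k) sums deriv F t" if "\<bar>t\<bar> < R" for t
    using power_series_has_deriv_sums(2)[OF F that] .
  have F'': "(\<lambda>k. diffs (diffs c) k * t ^ k) sums deriv (deriv F) t" if "\<bar>t\<bar> < R" for t
    using power_series_has_deriv_sums(2)[OF F' that] .
  show "c sums F 1" using F[of 1] R by simp
  have "(\<lambda>k. real (Suc k) * c (Suc k)) sums deriv F 1"
    using F'[of 1] R by (simp add: diffs_def)
  then show "(\<lambda>k. real k * c k) sums deriv F 1"
    using sums_Suc_iff[of "\<lambda>k. real k * c k"] by simp
  have "(\<lambda>k. real (Suc (Suc k)) * (real (Suc (Suc k)) - 1) * c (Suc (Suc k))) sums deriv (deriv F) 1"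
    using F''[of 1] R by (simp add: diffs_def algebra_simps)
  then show "(\<lambda>k. real k * (real k - 1) * c k) sums deriv (deriv F) 1"
    using sums_Suc_iff[of "\<lambda>k. real k * (real k - 1) * c k"]
      sums_Suc_iff[of "\<lambda>k. real (Suc k) * (real (Suc k) - 1) * c (Suc k)"] by simp
qed

lemma deriv_mult_exp_comp:
  fixes A H :: "real \<Rightarrow> real"
  assumes S: "open S" "t0 \<in> S"
    and A': "\<And>t. t \<in> S \<Longrightarrow> (A has_real_derivative deriv A t) (at t)"
    and H': "\<And>t. t \<in> S \<Longrightarrow> (H has_real_derivative deriv H t) (at t)"
    and A'': "(deriv A has_real_derivative deriv (deriv A) t0) (at t0)"
    and H'': "(deriv H has_real_derivative deriv (deriv H) t0) (at t0)"
  shows "deriv (\<lambda>t. A t * exp (u * H t)) t0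
           = exp (u * H t0) * (deriv A t0 + A t0 * u * deriv H t0)"
    and "deriv (deriv (\<lambda>t. A t * exp (u * H t))) t0
           = exp (u * H t0) * (deriv (deriv A) t0 + 2 * deriv A t0 * u * deriv H t0
               + A t0 * u * deriv (deriv H) t0 + A t0 * (u * deriv H t0)\<^sup>2)"
proof -
  define G' where "G' t = exp (u * H t) * (deriv A t + A t * u * deriv H t)" for t
  have G': "deriv (\<lambda>t. A t * exp (u * H t)) t = G' t" if "t \<in> S" for t
    unfolding G'_def
    by (rule DERIV_imp_deriv) (use A'[OF that] H'[OF that] in \<open>auto intro!: derivative_eq_intros simp: algebra_simps\<close>)
  then show "deriv (\<lambda>t. A t * exp (u * H t)) t0 = exp (u * H t0) * (deriv A t0 + A t0 * u * deriv H t0)"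
    using S by (simp add: G'_def)
  define G'' where "G'' = exp (u * H t0) * (deriv (deriv A) t0 + 2 * deriv A t0 * u * deriv H t0
      + A t0 * u * deriv (deriv H) t0 + A t0 * (u * deriv H t0)\<^sup>2)"
  have "(G' has_real_derivative G'') (at t0)"
    unfolding G'_def G''_def using A'[OF S(2)] H'[OF S(2)] A'' H''
    by (auto intro!: derivative_eq_intros simp: algebra_simps power2_eq_square)
  then have "(deriv (\<lambda>t. A t * exp (u * H t)) has_real_derivative G'') (at t0)"
    by (rule has_field_derivative_transform_within_open[OF _ S]) (simp add: G')
  then show "deriv (deriv (\<lambda>t. A t * exp (u * H t))) t0
           = exp (u * H t0) * (deriv (deriv A) t0 + 2 * deriv A t0 * u * deriv H t0
               + A t0 * u * deriv (deriv H) t0 + A t0 * (u * deriv H t0)\<^sup>2)"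
    unfolding G''_def by (rule DERIV_imp_deriv)
qed

lemma generating_function_central_moment:
  fixes a h w :: "nat \<Rightarrow> real" and A H :: "real \<Rightarrow> real"
  assumes R: "R > 1"
    and A: "\<And>t. \<bar>t\<bar> < R \<Longrightarrow> (\<lambda>k. a k * t ^ k) sums A t"
    and H: "\<And>t. \<bar>t\<bar> < R \<Longrightarrow> (\<lambda>k. h k * t ^ k) sums H t"
    and H'1: "deriv H 1 = 1"
    and w: "\<And>t. \<bar>t\<bar> < R \<Longrightarrow> (\<lambda>k. w k * t ^ k) sums (A t * exp (u * H t))"
  shows "w sums (A 1 * exp (u * H 1))"
    and "(\<lambda>k. w k * (real k - u)\<^sup>2) sums
           (exp (u * H 1) * (deriv (deriv A) 1 + deriv A 1 + A 1 * u * (1 + deriv (deriv H) 1)))"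
proof -
  note moments = power_series_factorial_moments[OF R w]
  have S: "open {-R<..<R}" "1 \<in> {-R<..<R}" using R by auto
  have A': "(A has_real_derivative deriv A t) (at t)" and H': "(H has_real_derivative deriv H t) (at t)"
    if "t \<in> {-R<..<R}" for t
    using power_series_has_deriv_sums(1)[OF A] power_series_has_deriv_sums(1)[OF H] that
    by (auto simp: abs_less_iff)
  have A'': "(deriv A has_real_derivative deriv (deriv A) 1) (at 1)"
    and H'': "(deriv H has_real_derivative deriv (deriv H) 1) (at 1)"
    using power_series_deriv2_at[OF A] power_series_deriv2_at[OF H] R by auto
  have G_derivs:
      "deriv (\<lambda>t. A t * exp (u * H t)) 1 = exp (u * H 1) * (deriv A 1 + A 1 * u)"
      "deriv (deriv (\<lambda>t. A t * exp (u * H t))) 1 = exp (u * H 1) *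
         (deriv (deriv A) 1 + 2 * deriv A 1 * u + A 1 * u * deriv (deriv H) 1 + A 1 * u\<^sup>2)"
    using deriv_mult_exp_comp[OF S A' H' A'' H''] H'1 by simp_all
  show "w sums (A 1 * exp (u * H 1))" using moments(1) by simp
  have "(\<lambda>k. real k * (real k - 1) * w k + (1 - 2 * u) * (real k * w k) + u\<^sup>2 * w k) sums
          (deriv (deriv (\<lambda>t. A t * exp (u * H t))) 1
           + (1 - 2 * u) * deriv (\<lambda>t. A t * exp (u * H t)) 1 + u\<^sup>2 * (A 1 * exp (u * H 1)))"
    by (intro sums_add sums_mult moments)
  moreover have "(\<lambda>k. real k * (real k - 1) * w k + (1 - 2 * u) * (real k * w k) + u\<^sup>2 * w k)
                 = (\<lambda>k. w k * (real k - u)\<^sup>2)"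
    by (auto simp: fun_eq_iff algebra_simps power2_eq_square)
  ultimately show "(\<lambda>k. w k * (real k - u)\<^sup>2) sums
           (exp (u * H 1) * (deriv (deriv A) 1 + deriv A 1 + A 1 * u * (1 + deriv (deriv H) 1)))"
    unfolding G_derivs by (simp add: algebra_simps power2_eq_square)
qed

lemma abs_diff_le_steps:
  fixes f :: "real \<Rightarrow> real"
  assumes \<delta>: "\<delta> > 0"
    and W: "\<And>s t. s \<ge> 0 \<Longrightarrow> t \<ge> 0 \<Longrightarrow> \<bar>s - t\<bar> \<le> \<delta> \<Longrightarrow> \<bar>f s - f t\<bar> \<le> W"
  shows "s \<ge> 0 \<Longrightarrow> t \<ge> 0 \<Longrightarrow> \<bar>s - t\<bar> \<le> real m * \<delta> \<Longrightarrow> \<bar>f s - f t\<bar> \<le> real m * W"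
proof (induction m arbitrary: s t)
  case 0
  then show ?case by simp
next
  case (Suc m)
  have W0: "W \<ge> 0" using W[of 0 0] \<delta> by simp
  have ordered: "\<bar>f s - f t\<bar> \<le> real (Suc m) * W"
    if "0 \<le> s" "s \<le> t" "t - s \<le> real (Suc m) * \<delta>" for s t
  proof (cases "t - s \<le> \<delta>")
    case True
    then have "\<bar>f s - f t\<bar> \<le> W" using W[of s t] that by simp
    also have "\<dots> \<le> real (Suc m) * W" using mult_right_mono[of 1 "real (Suc m)" W] W0 by simp
    finally show ?thesis .
  next
    case False
    have "\<bar>f s - f t\<bar> \<le> \<bar>f s - f (s + \<delta>)\<bar> + \<bar>f (s + \<delta>) - f t\<bar>" by simp
    also have "\<dots> \<le> W + real m * W"
      using W[of s "s + \<delta>"] Suc.IH[of "s + \<delta>" t] that \<delta> False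
      by (intro add_mono) (simp_all add: algebra_simps)
    finally show ?thesis by (simp add: algebra_simps)
  qed
  show ?case
    using ordered[of s t] ordered[of t s] Suc.prems
    by (cases "s \<le> t") (simp_all add: abs_minus_commute)
qed

lemma abs_diff_le_modulus_bound:
  fixes f :: "real \<Rightarrow> real"
  assumes \<delta>: "\<delta> > 0"
    and W: "\<And>s t. s \<ge> 0 \<Longrightarrow> t \<ge> 0 \<Longrightarrow> \<bar>s - t\<bar> \<le> \<delta> \<Longrightarrow> \<bar>f s - f t\<bar> \<le> W"
    and s: "s \<ge> 0" and t: "t \<ge> 0"
  shows "\<bar>f s - f t\<bar> \<le> (1 + \<bar>s - t\<bar> / \<delta>) * W"
proof -
  define m where "m = nat \<lceil>\<bar>s - t\<bar> / \<delta>\<rceil>"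
  have W0: "W \<ge> 0" using W[of 0 0] \<delta> by simp
  have "real m = of_int \<lceil>\<bar>s - t\<bar> / \<delta>\<rceil>"
    using \<delta> by (simp add: m_def)
  then have m: "\<bar>s - t\<bar> / \<delta> \<le> real m" "real m \<le> 1 + \<bar>s - t\<bar> / \<delta>"
    using of_int_ceiling_le_add_one[of "\<bar>s - t\<bar> / \<delta>"] by linarith+
  have "\<bar>f s - f t\<bar> \<le> real m * W"
    using abs_diff_le_steps[OF \<delta> W s t] m(1) \<delta> by (simp add: field_simps)
  also have "\<dots> \<le> (1 + \<bar>s - t\<bar> / \<delta>) * W"
    using m(2) W0 by (rule mult_right_mono)
  finally show ?thesis .
qed

lemma weighted_mean_abs_le_sqrt:
  fixes w z :: "nat \<Rightarrow> real"
  assumes w0: "\<And>k. w k \<ge> 0" and w: "w sums S" and S: "S > 0"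
    and V: "(\<lambda>k. w k * (z k)\<^sup>2) sums (S * V)"
  shows "summable (\<lambda>k. w k * \<bar>z k\<bar>)" and "(\<Sum>k. w k * \<bar>z k\<bar>) \<le> S * sqrt V"
proof -
  have "w k * \<bar>z k\<bar> \<le> w k + w k * (z k)\<^sup>2" for k
  proof -
    have "1 + (z k)\<^sup>2 - \<bar>z k\<bar> = (\<bar>z k\<bar> - 1)\<^sup>2 + \<bar>z k\<bar>"
      by (simp add: power2_eq_square algebra_simps)
    then have "\<bar>z k\<bar> \<le> 1 + (z k)\<^sup>2"
      by (smt (verit) abs_ge_zero zero_le_power2)
    then have "w k * \<bar>z k\<bar> \<le> w k * (1 + (z k)\<^sup>2)" by (rule mult_left_mono) (rule w0)
    then show ?thesis by (simp add: algebra_simps)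
  qed
  then show summ: "summable (\<lambda>k. w k * \<bar>z k\<bar>)"
    using w0 by (intro summable_comparison_test'[OF sums_summable[OF sums_add[OF w V]]]) simp
  define m where "m = (\<Sum>k. w k * \<bar>z k\<bar>) / S"
  have "(\<lambda>k. w k * \<bar>z k\<bar>) sums (S * m)"
    using S summ by (simp add: m_def summable_sums)
  then have "(\<lambda>k. w k * (z k)\<^sup>2 - 2 * m * (w k * \<bar>z k\<bar>) + m\<^sup>2 * w k)
             sums (S * V - 2 * m * (S * m) + m\<^sup>2 * S)"
    by (rule sums_add[OF sums_diff[OF V sums_mult] sums_mult[OF w]])
  moreover have "(\<lambda>k. w k * (z k)\<^sup>2 - 2 * m * (w k * \<bar>z k\<bar>) + m\<^sup>2 * w k)
                 = (\<lambda>k. w k * (\<bar>z k\<bar> - m)\<^sup>2)"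
    by (simp add: fun_eq_iff power2_eq_square algebra_simps)
  moreover have "S * V - 2 * m * (S * m) + m\<^sup>2 * S = S * (V - m\<^sup>2)"
    by (simp add: power2_eq_square algebra_simps)
  ultimately have var: "(\<lambda>k. w k * (\<bar>z k\<bar> - m)\<^sup>2) sums (S * (V - m\<^sup>2))" by simp
  have "0 \<le> S * (V - m\<^sup>2)"
    by (rule sums_le[OF _ sums_zero var]) (simp add: w0)
  then have "m \<le> sqrt V"
    using S by (intro real_le_rsqrt) (simp add: zero_le_mult_iff)
  then show "(\<Sum>k. w k * \<bar>z k\<bar>) \<le> S * sqrt V"
    using S by (simp add: m_def field_simps)
qed

lemma positive_weights_modulus_estimate:
  fixes w y :: "nat \<Rightarrow> real" and f :: "real \<Rightarrow> real"
  assumes w0: "\<And>k. w k \<ge> 0" and w: "w sums S" and S: "S > 0"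
    and V: "(\<lambda>k. w k * (y k - x)\<^sup>2) sums (S * V)"
    and y: "\<And>k. y k \<ge> 0" and x: "x \<ge> 0" and \<delta>: "\<delta> > 0"
    and W: "\<And>s t. s \<ge> 0 \<Longrightarrow> t \<ge> 0 \<Longrightarrow> \<bar>s - t\<bar> \<le> \<delta> \<Longrightarrow> \<bar>f s - f t\<bar> \<le> W"
  shows "\<bar>(\<Sum>k. w k * f (y k)) / S - f x\<bar> \<le> (1 + sqrt V / \<delta>) * W"
proof -
  have W0: "W \<ge> 0" using W[of 0 0] \<delta> by simp
  note mean = weighted_mean_abs_le_sqrt[where z = "\<lambda>k. y k - x", OF w0 w S V]
  define g where "g k = w k * (f (y k) - f x)" for k
  define B where "B k = W * w k + W / \<delta> * (w k * \<bar>y k - x\<bar>)" for k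
  have gB: "\<bar>g k\<bar> \<le> B k" for k
  proof -
    have "\<bar>g k\<bar> = w k * \<bar>f (y k) - f x\<bar>" using w0[of k] by (simp add: g_def abs_mult)
    also have "\<dots> \<le> w k * ((1 + \<bar>y k - x\<bar> / \<delta>) * W)"
      by (intro mult_left_mono abs_diff_le_modulus_bound[OF \<delta> W y x] w0)
    also have "\<dots> = B k" by (simp add: B_def algebra_simps)
    finally show ?thesis .
  qed
  have B: "B sums (W * S + W / \<delta> * (\<Sum>k. w k * \<bar>y k - x\<bar>))"
    unfolding B_def by (intro sums_add sums_mult w summable_sums mean(1))
  have g_abs: "summable (\<lambda>k. \<bar>g k\<bar>)"
    using gB by (intro summable_rabs_comparison_test[OF _ sums_summable[OF B]]) auto
  have "(\<lambda>k. g k + f x * w k) sums (suminf g + f x * S)"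
    by (intro sums_add sums_mult w summable_sums summable_rabs_cancel[OF g_abs])
  then have "(\<Sum>k. w k * f (y k)) = suminf g + f x * S"
    by (simp add: g_def algebra_simps sums_iff)
  then have "\<bar>(\<Sum>k. w k * f (y k)) / S - f x\<bar> = \<bar>suminf g\<bar> / S"
    using S by (simp add: field_simps)
  also have "\<dots> \<le> suminf B / S"
    using summable_rabs[OF g_abs] suminf_le[OF gB g_abs sums_summable[OF B]] S
    by (intro divide_right_mono) auto
  also have "\<dots> \<le> (1 + sqrt V / \<delta>) * W"
  proof -
    have "W / \<delta> * (\<Sum>k. w k * \<bar>y k - x\<bar>) \<le> W / \<delta> * (S * sqrt V)"
      using mean(2) W0 \<delta> by (intro mult_left_mono) auto
    then show ?thesis
      using sums_unique[OF B] S by (simp add: field_simps)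
  qed
  finally show ?thesis .
qed

lemma abs_diff_le_modulus:
  fixes f :: "real \<Rightarrow> real"
  assumes "s \<ge> 0" "t \<ge> 0" "\<bar>s - t\<bar> \<le> \<delta>"
  shows "ereal \<bar>f s - f t\<bar> \<le> modulus f \<delta>"
  unfolding modulus_def by (rule SUP_upper2[of "(s, t)"]) (use assms in auto)

text \<open>\<open>K > 0\<close> is needed because \<open>0 * \<infinity> = 0\<close> in \<open>ereal\<close>.\<close>

lemma le_mult_modulusI:
  fixes f :: "real \<Rightarrow> real"
  assumes K: "K > 0" and \<delta>: "\<delta> \<ge> 0"
    and bound: "\<And>W. (\<And>s t. s \<ge> 0 \<Longrightarrow> t \<ge> 0 \<Longrightarrow> \<bar>s - t\<bar> \<le> \<delta> \<Longrightarrow> \<bar>f s - f t\<bar> \<le> W)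
                   \<Longrightarrow> z \<le> K * W"
  shows "ereal z \<le> ereal K * modulus f \<delta>"
proof (cases "modulus f \<delta>")
  case (real W)
  then have "z \<le> K * W" using abs_diff_le_modulus[of _ _ \<delta> f] by (intro bound) force
  then show ?thesis using real by simp
next
  case PInf
  then show ?thesis using K by simp
next
  case MInf
  then show ?thesis using abs_diff_le_modulus[of 0 0 \<delta> f] \<delta> by simp
qed

lemma nonneg_affine_imp_slope_nonneg:
  fixes \<alpha> \<beta> :: real
  assumes "\<And>u. u \<ge> 0 \<Longrightarrow> 0 \<le> \<alpha> + \<beta> * u"
  shows "0 \<le> \<beta>"
proof (rule ccontr)
  assume "\<not> 0 \<le> \<beta>"
  define u where "u = (\<bar>\<alpha>\<bar> + 1) / - \<beta>"
  have "u \<ge> 0" and "\<beta> * u = - (\<bar>\<alpha>\<bar> + 1)"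
    using \<open>\<not> 0 \<le> \<beta>\<close> by (simp_all add: u_def divide_nonneg_neg)
  then show False using assms[of u] by linarith
qed

locale sheffer =
  fixes R :: real and a h :: "nat \<Rightarrow> real" and A H :: "real \<Rightarrow> real"
    and p :: "nat \<Rightarrow> real \<Rightarrow> real"
  assumes R: "R > 1"
    and A: "\<And>t. \<bar>t\<bar> < R \<Longrightarrow> (\<lambda>k. a k * t ^ k) sums A t"
    and H: "\<And>t. \<bar>t\<bar> < R \<Longrightarrow> (\<lambda>k. h k * t ^ k) sums H t"
    and p_gen: "\<And>x t. \<bar>t\<bar> < R \<Longrightarrow> (\<lambda>k. p k x * t ^ k) sums (A t * exp (x * H t))"
    and p_nonneg: "\<And>k x. x \<ge> 0 \<Longrightarrow> p k x \<ge> 0"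
    and A1: "A 1 \<noteq> 0" and H'1: "deriv H 1 = 1"
begin

lemmas weights_sums = generating_function_central_moment(1)[OF R A H H'1 p_gen]
lemmas central_moment = generating_function_central_moment(2)[OF R A H H'1 p_gen]

lemma A1_pos: "A 1 > 0"
proof -
  have "0 \<le> A 1 * exp (0 * H 1)"
    by (rule sums_le[OF _ sums_zero weights_sums]) (simp add: p_nonneg)
  with A1 show ?thesis by simp
qed

lemma second_deriv_bound: "1 + deriv (deriv H) 1 \<ge> 0"
proof -
  have "0 \<le> deriv (deriv A) 1 + deriv A 1 + A 1 * (1 + deriv (deriv H) 1) * u" if "u \<ge> 0" for u
  proof -
    have "0 \<le> exp (u * H 1) * (deriv (deriv A) 1 + deriv A 1 + A 1 * u * (1 + deriv (deriv H) 1))"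
      by (rule sums_le[OF _ sums_zero central_moment]) (simp add: p_nonneg that)
    then have "0 \<le> deriv (deriv A) 1 + deriv A 1 + A 1 * u * (1 + deriv (deriv H) 1)"
      by (simp add: zero_le_mult_iff)
    then show ?thesis by (simp add: algebra_simps)
  qed
  then have "0 \<le> A 1 * (1 + deriv (deriv H) 1)"
    by (rule nonneg_affine_imp_slope_nonneg)
  with A1_pos show ?thesis by (simp add: zero_le_mult_iff)
qed

lemma scaled_central_moment:
  assumes \<beta>: "\<beta> > 0" and x: "x \<ge> 0"
  defines "Q \<equiv> x * (1 + deriv (deriv H) 1) + \<beta> * (deriv A 1 + deriv (deriv A) 1) / A 1"
  shows "(\<lambda>k. p k (x / \<beta>) * (real k * \<beta> - x)\<^sup>2) sums (A 1 * exp (x / \<beta> * H 1) * (\<beta> * Q))"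
    and "Q \<ge> 0"
proof -
  define u where "u = x / \<beta>"
  have "(\<lambda>k. \<beta>\<^sup>2 * (p k u * (real k - u)\<^sup>2)) sums (\<beta>\<^sup>2 * (exp (u * H 1) *
          (deriv (deriv A) 1 + deriv A 1 + A 1 * u * (1 + deriv (deriv H) 1))))"
    by (rule sums_mult[OF central_moment])
  moreover have "\<beta>\<^sup>2 * (p k u * (real k - u)\<^sup>2) = p k u * (real k * \<beta> - x)\<^sup>2" for k
  proof -
    have "real k * \<beta> - x = \<beta> * (real k - u)" using \<beta> by (simp add: u_def algebra_simps)
    then show ?thesis by (simp add: power_mult_distrib)
  qed
  moreover have "\<beta>\<^sup>2 * (exp (u * H 1) *
          (deriv (deriv A) 1 + deriv A 1 + A 1 * u * (1 + deriv (deriv H) 1)))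
        = A 1 * exp (u * H 1) * (\<beta> * Q)"
    using A1_pos \<beta> by (simp add: Q_def u_def field_simps power2_eq_square)
  ultimately have "(\<lambda>k. p k u * (real k * \<beta> - x)\<^sup>2) sums (A 1 * exp (u * H 1) * (\<beta> * Q))"
    by simp
  then show var: "(\<lambda>k. p k (x / \<beta>) * (real k * \<beta> - x)\<^sup>2) sums (A 1 * exp (x / \<beta> * H 1) * (\<beta> * Q))"
    unfolding u_def .
  have "0 \<le> A 1 * exp (x / \<beta> * H 1) * (\<beta> * Q)"
    by (rule sums_le[OF _ sums_zero var]) (simp add: p_nonneg x \<beta> less_imp_le)
  then show "Q \<ge> 0" using A1_pos \<beta> by (simp add: zero_le_mult_iff mult_le_0_iff)
qed

end

theorem theorem2p6:
  fixes a h :: "nat \<Rightarrow> real" and A H :: "real \<Rightarrow> real" and R :: real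
    and p :: "nat \<Rightarrow> real \<Rightarrow> real" and b :: "nat \<Rightarrow> real"
    and f :: "real \<Rightarrow> real" and aa x :: real and n :: nat
  assumes R: "R > 1"
    and conv_a: "ereal R \<le> conv_radius a" and conv_h: "ereal R \<le> conv_radius h"
    and a0: "a 0 \<noteq> 0" and h0: "h 0 = 0" and h1: "h 1 \<noteq> 0"
    and A_def: "\<And>t. \<bar>t\<bar> < R \<Longrightarrow> (\<lambda>k. a k * t ^ k) sums A t"
    and H_def: "\<And>t. \<bar>t\<bar> < R \<Longrightarrow> (\<lambda>k. h k * t ^ k) sums H t"
    and p_gen: "\<And>x t. \<bar>t\<bar> < R \<Longrightarrow> (\<lambda>k. p k x * t ^ k) sums (A t * exp (x * H t))"
    and p_nonneg: "\<And>k x. x \<ge> 0 \<Longrightarrow> p k x \<ge> 0"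
    and A1: "A 1 \<noteq> 0" and H'1: "deriv H 1 = 1"
    and b_pos: "\<And>n. b n > 0" and b_inc: "incseq b"
    and b_inf: "filterlim b at_top sequentially"
    and b_o: "(\<lambda>n. b n / real n) \<longlonglongrightarrow> 0"
    and aa: "aa > 0"
    and f: "C_E f"
    and n: "n > 0"
    and x: "x \<in> {0..aa}"
  shows "ereal \<bar>T_star A H p b n f x - f x\<bar>
           \<le> ereal (1 + sqrt ((1 + deriv (deriv H) 1) * aa
                  + b n / real n * (deriv A 1 + deriv (deriv A) 1) / A 1))
             * modulus f (sqrt (b n / real n))"
proof -
  interpret sheffer R a h A H p
    using R A_def H_def p_gen p_nonneg A1 H'1 by unfold_locales
  define \<beta> where "\<beta> = b n / real n"
  define Q where "Q = x * (1 + deriv (deriv H) 1) + \<beta> * (deriv A 1 + deriv (deriv A) 1) / A 1"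
  define M where "M = (1 + deriv (deriv H) 1) * aa + \<beta> * (deriv A 1 + deriv (deriv A) 1) / A 1"
  have \<beta>: "\<beta> > 0" using b_pos[of n] n by (simp add: \<beta>_def)
  have x0: "0 \<le> x" "x \<le> aa" using x by auto
  note var = scaled_central_moment[OF \<beta> x0(1), folded Q_def]
  have QM: "Q \<le> M"
    using mult_left_mono[OF x0(2) second_deriv_bound] by (simp add: Q_def M_def algebra_simps)
  have T: "T_star A H p b n f x = (\<Sum>k. p k (x / \<beta>) * f (real k * \<beta>)) / (A 1 * exp (x / \<beta> * H 1))"
    using \<beta> by (simp add: T_star_def \<beta>_def exp_minus field_simps)
  show ?thesis
    unfolding \<beta>_def[symmetric] M_def[symmetric]
  proof (rule le_mult_modulusI)
    show "1 + sqrt M > 0" using var(2) QM by (smt (verit) real_sqrt_ge_zero)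
    show "sqrt \<beta> \<ge> 0" using \<beta> by simp
    fix W
    assume W: "\<And>s t. s \<ge> 0 \<Longrightarrow> t \<ge> 0 \<Longrightarrow> \<bar>s - t\<bar> \<le> sqrt \<beta> \<Longrightarrow> \<bar>f s - f t\<bar> \<le> W"
    have "\<bar>T_star A H p b n f x - f x\<bar> \<le> (1 + sqrt (\<beta> * Q) / sqrt \<beta>) * W"
      unfolding T using \<beta> x0 A1_pos
      by (intro positive_weights_modulus_estimate[OF _ weights_sums _ var(1) _ _ _ W])
         (simp_all add: p_nonneg)
    also have "\<dots> \<le> (1 + sqrt M) * W"
      using \<beta> QM W[of 0 0] by (intro mult_right_mono) (simp_all add: real_sqrt_mult)
    finally show "\<bar>T_star A H p b n f x - f x\<bar> \<le> (1 + sqrt M) * W" .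
  qed
qed

end
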